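(* For all messages $M,M'$ and input histories $s,s'$: (1) if $s\,R^c_M\,s'$ then $M\in\mathrm{cl}_{\mathsf{CM}}(s')$; (2) if $M\in\mathrm{cl}_{\mathsf{CM}}(s)$ then $s\,R^c_M\,s$; (3) there is an input history $s'$ with $s\,R^c_M\,s'$; (4) $R^c_M\subseteq R^c_{\mathsf{CM}}={\sqsubseteq}$; (5) if $s\,R^c_{\mathsf{CM}}\,t$ and $t\,R^c_M\,s'$ for some $t$, then $s\,R^c_M\,s'$; (6) if $M\preceq M'$ then $R^c_M\subseteq R^c_{M'}$.
   Context: Fix a finite set $\mathcal{A}$ of agent names containing a distinguished name $\mathsf{CM}$ (the communication medium). Messages are terms $M ::= a \mid B \mid (M,M)$ with $a\in\mathcal{A}$, $B$ optional application-specific data constants, $(M,M')$ pairs. Input histories are finite words of input events $\mathrm{in}_a(M)$ ("agent $a$ receives message $M$"), $a\in\mathcal{A}$, $M$ a message; $\mathtt{0}$ is the empty history, $\mathrm{in}_a(M)(s)$ extends $s$ by the event $\mathrm{in}_a(M)$, and $\star$ is word concatenation (with neutral element $\mathtt{0}$). The projection $\pi_a$ is defined by $\pi_a(\mathtt{0})=\mathtt{0}$ and $\pi_a(\mathrm{in}_b(M)(s))=\mathrm{in}_b(M)(\pi_a(s))$ if $a\in\{b,\mathsf{CM}\}$, and $=\pi_a(s)$ otherwise. $\mathrm{msgs}(s)$ is the set of messages occurring in events of $s$, and $\mathrm{cl}_a(s)$ is the smallest set of messages containing $a$ and $\mathrm{msgs}(\pi_a(s))$, closed under forming pairs of its elements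 and taking both components of pairs in it. $s\sqsubseteq_a s'$ iff there is $s''$ with $\pi_a(s)\star\pi_a(s'')=\pi_a(s')$; ${\sqsubseteq}:={\sqsubseteq_{\mathsf{CM}}}$; $s\equiv_a s'$ iff $s\sqsubseteq_a s'$ and $s'\sqsubseteq_a s$. The concrete accessibility: $s\,R^c_M\,s'$ iff there is an input history $\tilde s$ with $s\sqsubseteq_{\mathsf{CM}}\tilde s$, $M\in\mathrm{cl}_{\mathsf{CM}}(\tilde s)$ and $\tilde s\equiv_{\mathsf{CM}} s'$. For messages, $M\preceq M'$ iff for every input history $s$, $M\in\mathrm{cl}_{\mathsf{CM}}(s)$ implies $M'\in\mathrm{cl}_{\mathsf{CM}}(s)$. *)

theory Defs
  imports Main
begin

datatype ('a, 'b) msg = Agent 'a | Data 'b | MPair "('a, 'b) msg" "('a, 'b) msg"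

datatype ('a, 'b) event = In 'a "('a, 'b) msg"

(* input histories: finite words of input events; 0 = [], in_a(M)(s) = In a M # s, star = @ *)
type_synonym ('a, 'b) hist = "('a, 'b) event list"

(* projection pi_a, parameterised by the distinguished agent cm (the communication medium) *)
fun proj :: "'a \<Rightarrow> 'a \<Rightarrow> ('a, 'b) hist \<Rightarrow> ('a, 'b) hist" where
  "proj cm a [] = []"
| "proj cm a (In b M # s) = (if a \<in> {b, cm} then In b M # proj cm a s else proj cm a s)"

fun msgs :: "('a, 'b) hist \<Rightarrow> ('a, 'b) msg set" where
  "msgs [] = {}"
| "msgs (In b M # s) = insert M (msgs s)"

inductive_set cl :: "'a \<Rightarrow> 'a \<Rightarrow> ('a, 'b) hist \<Rightarrow> ('a, 'b) msg set"
  for cm :: 'a and a :: 'a and s :: "('a, 'b) hist" where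
  cl_agent: "Agent a \<in> cl cm a s"
| cl_msgs: "M \<in> msgs (proj cm a s) \<Longrightarrow> M \<in> cl cm a s"
| cl_pair: "M \<in> cl cm a s \<Longrightarrow> M' \<in> cl cm a s \<Longrightarrow> MPair M M' \<in> cl cm a s"
| cl_fst: "MPair M M' \<in> cl cm a s \<Longrightarrow> M \<in> cl cm a s"
| cl_snd: "MPair M M' \<in> cl cm a s \<Longrightarrow> M' \<in> cl cm a s"

definition sqle_a :: "'a \<Rightarrow> 'a \<Rightarrow> ('a, 'b) hist \<Rightarrow> ('a, 'b) hist \<Rightarrow> bool" where
  "sqle_a cm a s s' \<longleftrightarrow> (\<exists>s''. proj cm a s @ proj cm a s'' = proj cm a s')"

definition sqle :: "'a \<Rightarrow> ('a, 'b) hist \<Rightarrow> ('a, 'b) hist \<Rightarrow> bool" where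
  "sqle cm = sqle_a cm cm"

definition equiv_a :: "'a \<Rightarrow> 'a \<Rightarrow> ('a, 'b) hist \<Rightarrow> ('a, 'b) hist \<Rightarrow> bool" where
  "equiv_a cm a s s' \<longleftrightarrow> sqle_a cm a s s' \<and> sqle_a cm a s' s"

definition Rc :: "'a \<Rightarrow> ('a, 'b) msg \<Rightarrow> ('a, 'b) hist \<Rightarrow> ('a, 'b) hist \<Rightarrow> bool" where
  "Rc cm M s s' \<longleftrightarrow> (\<exists>t. sqle_a cm cm s t \<and> M \<in> cl cm cm t \<and> equiv_a cm cm t s')"

definition msg_le :: "'a \<Rightarrow> ('a, 'b) msg \<Rightarrow> ('a, 'b) msg \<Rightarrow> bool" where
  "msg_le cm M M' \<longleftrightarrow> (\<forall>s. M \<in> cl cm cm s \<longrightarrow> M' \<in> cl cm cm s)"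

end

theory Submission
  imports Defs "HOL-Library.Sublist"
begin

text \<open>Since the medium sees every event, \<open>\<sqsubseteq>\<^sub>C\<^sub>M\<close> is the prefix order and
  \<open>\<equiv>\<^sub>C\<^sub>M\<close> is equality. Hence \<open>s R\<^sup>c\<^sub>M s'\<close> just says that \<open>s\<close> is a prefix of \<open>s'\<close>
  and \<open>M\<close> is derivable from \<open>s'\<close>; every clause then follows from
  \<open>Agent CM \<in> cl\<^sub>C\<^sub>M(s)\<close>, transitivity of prefixes, and the fact that \<open>M\<close> becomes
  derivable once the event \<open>in\<^sub>C\<^sub>M(M)\<close> is appended.\<close>

lemma proj_self [simp]: "proj cm cm s = s"
  by (induction s rule: proj.induct) auto

lemma msgs_append: "msgs (s @ t) = msgs s \<union> msgs t"
  by (induction s rule: msgs.induct) auto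

lemma sqle_iff_prefix: "sqle cm s t \<longleftrightarrow> prefix s t"
  by (auto simp: sqle_def sqle_a_def prefix_def)

lemma equiv_a_self_iff: "equiv_a cm cm s t \<longleftrightarrow> s = t"
  by (auto simp: equiv_a_def sqle_a_def)

lemma Rc_iff: "Rc cm M s s' \<longleftrightarrow> prefix s s' \<and> M \<in> cl cm cm s'"
  by (auto simp: Rc_def equiv_a_self_iff sqle_iff_prefix[unfolded sqle_def])

lemma Rc_imp_cl: "Rc cm M s s' \<Longrightarrow> M \<in> cl cm cm s'"
  by (simp add: Rc_iff)

lemma Rc_refl: "M \<in> cl cm cm s \<Longrightarrow> Rc cm M s s"
  by (simp add: Rc_iff)

lemma Rc_snoc_In: "Rc cm M s (s @ [In a M])"
  by (auto simp: Rc_iff msgs_append intro: cl_msgs)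

lemma Rc_Agent_eq_sqle: "Rc cm (Agent cm) = sqle cm"
  by (auto simp: fun_eq_iff Rc_iff sqle_iff_prefix intro: cl_agent)

lemma Rc_le_Rc_Agent: "Rc cm M \<le> Rc cm (Agent cm)"
  by (auto simp: Rc_iff intro: cl_agent)

lemma Rc_Agent_Rc_trans: "Rc cm (Agent cm) s t \<Longrightarrow> Rc cm M t s' \<Longrightarrow> Rc cm M s s'"
  by (auto simp: Rc_iff intro: prefix_order.trans)

lemma Rc_mono: "msg_le cm M M' \<Longrightarrow> Rc cm M \<le> Rc cm M'"
  by (auto simp: Rc_iff msg_le_def)

theorem proposition2:
  fixes cm :: "'a::finite" and M M' :: "('a, 'b) msg" and s s' :: "('a, 'b) hist"
  shows "(Rc cm M s s' \<longrightarrow> M \<in> cl cm cm s')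
    \<and> (M \<in> cl cm cm s \<longrightarrow> Rc cm M s s)
    \<and> (\<exists>s'. Rc cm M s s')
    \<and> (Rc cm M \<le> Rc cm (Agent cm) \<and> Rc cm (Agent cm) = sqle cm)
    \<and> (\<forall>t. Rc cm (Agent cm) s t \<and> Rc cm M t s' \<longrightarrow> Rc cm M s s')
    \<and> (msg_le cm M M' \<longrightarrow> Rc cm M \<le> Rc cm M')"
proof (intro conjI allI impI)
  show "\<exists>s'. Rc cm M s s'"
    by (rule exI, rule Rc_snoc_In)
  show "Rc cm M s s'" if "Rc cm (Agent cm) s t \<and> Rc cm M t s'" for t
    using that by (auto intro: Rc_Agent_Rc_trans)
qed (fact Rc_imp_cl Rc_refl Rc_le_Rc_Agent Rc_Agent_eq_sqle Rc_mono)+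

end
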